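(* For the model $\dot S=\Lambda-F_1(S,I_1)-F_2(S,I_2)-\lambda S$, $\dot V_1=rS-(\mu+kI_2)V_1$, $\dot I_1=F_1(S,I_1)-\alpha_1I_1$, $\dot I_2=F_2(S,I_2)+kI_2V_1-\alpha_2I_2$, the closed set $\Omega_1=\{(S,V_1,I_1,I_2)\in\Omega : S\le S^0,\ V_1\le V_1^0\}$ is positively invariant.
   Context: The state is $(S,V_1,I_1,I_2)\in\mathbb{R}^4_+$. The constants $\Lambda,\mu,r,k,\gamma_1,\gamma_2>0$ and $v_1,v_2\ge0$; $\lambda=r+\mu$ and $\alpha_i=\gamma_i+v_i+\mu$. For $i=1,2$ the incidence functions satisfy: (H1) $F_i(S,I_i)=I_if_i(S,I_i)$ with $F_i,f_i\in C^2(\mathbb{R}^2_+,\mathbb{R}_+)$ and $F_i(0,I_i)=F_i(S,0)=0$; (H2) $\partial f_i/\partial S>0$ and $\partial f_i/\partial I_i\le0$ on $\mathbb{R}^2_+$; (H3) $\lim_{I_i\to0^+}F_i(S,I_i)/I_i$ exists and is positive for $S>0$. Here $\Omega=\{(S,V_1,I_1,I_2)\in\mathbb{R}^4_+: S+V_1+I_1+I_2\le\Lambda/\mu\}$, $S^0=\Lambda/\lambda$ and $V_1^0=r\Lambda/(\mu\lambda)$. *)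

theory Defs
  imports "HOL-Analysis.Analysis"
begin

definition quad2 :: "(real \<times> real) set" where
  "quad2 = {p. 0 \<le> fst p \<and> 0 \<le> snd p}"

text \<open>g is of class C^2 on the set A: twice Frechet differentiable with
  continuous second derivative on some open set containing A
  (the usual meaning of C^2 on a closed set such as the quadrant).\<close>
definition C2_on :: "(real \<times> real) set \<Rightarrow> (real \<times> real \<Rightarrow> real) \<Rightarrow> bool" where
  "C2_on A g \<longleftrightarrow> (\<exists>U g' g''. open U \<and> A \<subseteq> U \<and>
      (\<forall>x\<in>U. (g has_derivative blinfun_apply (g' x)) (at x)) \<and>
      (\<forall>x\<in>U. (g' has_derivative blinfun_apply (g'' x)) (at x)) \<and>
      continuous_on U g'')"

definition incidence_hyp :: "(real \<Rightarrow> real \<Rightarrow> real) \<Rightarrow> (real \<Rightarrow> real \<Rightarrow> real) \<Rightarrow> bool" where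
  "incidence_hyp F f \<longleftrightarrow>
     \<comment> \<open>(H1)\<close>
     (\<forall>S I. 0 \<le> S \<longrightarrow> 0 \<le> I \<longrightarrow> F S I = I * f S I) \<and>
     C2_on quad2 (\<lambda>p. F (fst p) (snd p)) \<and> C2_on quad2 (\<lambda>p. f (fst p) (snd p)) \<and>
     (\<forall>S I. 0 \<le> S \<longrightarrow> 0 \<le> I \<longrightarrow> 0 \<le> F S I \<and> 0 \<le> f S I) \<and>
     (\<forall>I. 0 \<le> I \<longrightarrow> F 0 I = 0) \<and> (\<forall>S. 0 \<le> S \<longrightarrow> F S 0 = 0) \<and>
     \<comment> \<open>(H2)\<close>
     (\<forall>S I. 0 \<le> S \<longrightarrow> 0 \<le> I \<longrightarrow> deriv (\<lambda>s. f s I) S > 0) \<and>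
     (\<forall>S I. 0 \<le> S \<longrightarrow> 0 \<le> I \<longrightarrow> deriv (\<lambda>i. f S i) I \<le> 0) \<and>
     \<comment> \<open>(H3)\<close>
     (\<forall>S. 0 < S \<longrightarrow> (\<exists>L>0. ((\<lambda>I. F S I / I) \<longlongrightarrow> L) (at_right 0)))"

definition Omega :: "real \<Rightarrow> real \<Rightarrow> (real \<times> real \<times> real \<times> real) set" where
  "Omega \<Lambda> \<mu> = {(S, V1, I1, I2). 0 \<le> S \<and> 0 \<le> V1 \<and> 0 \<le> I1 \<and> 0 \<le> I2 \<and>
                                  S + V1 + I1 + I2 \<le> \<Lambda> / \<mu>}"

definition Omega1 :: "real \<Rightarrow> real \<Rightarrow> real \<Rightarrow> (real \<times> real \<times> real \<times> real) set" where
  "Omega1 \<Lambda> \<mu> r = {(S, V1, I1, I2). (S, V1, I1, I2) \<in> Omega \<Lambda> \<mu> \<and>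
                     S \<le> \<Lambda> / (r + \<mu>) \<and> V1 \<le> r * \<Lambda> / (\<mu> * (r + \<mu>))}"

end

theory Submission
  imports Defs
begin

(* Nonnegativity of S, I1 and I2 is pushed forward in time by a continuation argument. At S = 0
   both incidences vanish, so S' = \<Lambda> > 0. Near I_i = 0 the C^1 incidence obeys
   |F_i(S, I_i)| \<le> M |I_i|, so I_i' \<ge> C I_i while I_i < 0, and then I_i e^{-Ct} cannot decrease
   below zero. Once S, I1, I2 \<ge> 0 are known, every remaining bound is a barrier: the derivative
   points back into the region as soon as V1 < 0, S > S^0, V1 > V1^0 or N = S + V1 + I1 + I2 > \<Lambda>/\<mu>,
   because V1' \<ge> r S, S' \<le> \<Lambda> - \<lambda> S, V1' \<le> r S^0 - \<mu> V1 and N' \<le> \<Lambda> - \<mu> N there. *)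

lemma nonneg_if_deriv_ge_linear_on_neg:
  fixes x x' :: "real \<Rightarrow> real" and a b C :: real
  assumes der: "\<And>t. t \<in> {a..b} \<Longrightarrow> (x has_real_derivative x' t) (at t within {a..b})"
    and start: "0 \<le> x a"
    and bound: "\<And>t. t \<in> {a<..<b} \<Longrightarrow> x t < 0 \<Longrightarrow> C * x t \<le> x' t"
  shows "\<forall>t\<in>{a..b}. 0 \<le> x t"
proof (rule ccontr)
  assume "\<not> ?thesis"
  then obtain t2 where t2: "t2 \<in> {a..b}" "x t2 < 0" by force
  have cont: "continuous_on {a..b} x" using der by (rule DERIV_continuous_on)
  define A where "A = {s \<in> {a..t2}. 0 \<le> x s}"
  have "closed A" unfolding A_def
    by (rule continuous_on_closed_Collect_le) (use cont t2 in \<open>auto intro: continuous_on_subset\<close>)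
  moreover have "a \<in> A" "bdd_above A" using start t2 by (auto simp: A_def)
  ultimately have "Sup A \<in> A" using closed_contains_Sup by blast
  define t1 where "t1 = Sup A"
  have t1: "a \<le> t1" "t1 \<le> t2" "0 \<le> x t1" using \<open>Sup A \<in> A\<close> by (auto simp: A_def t1_def)
  with t2 have "t1 < t2" by (cases "t1 = t2") auto
  have neg: "x s < 0" if "t1 < s" "s \<le> t2" for s
  proof (rule ccontr)
    assume "\<not> x s < 0"
    with that t1 have "s \<in> A" by (auto simp: A_def)
    then have "s \<le> t1" unfolding t1_def using \<open>bdd_above A\<close> by (rule cSup_upper)
    with that show False by simp
  qed
  \<comment> \<open>On the last excursion below zero, x' \<ge> C x makes x(s) e^{-Cs} nondecreasing.\<close>
  define g where "g s = x s * exp (- C * s)" for s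
  have "g t1 \<le> g t2"
  proof (rule DERIV_nonneg_imp_increasing_open[OF less_imp_le[OF \<open>t1 < t2\<close>]])
    fix s assume s: "t1 < s" "s < t2"
    with t1 t2 have "at s within {a..b} = at s" by (intro at_within_Icc_at) auto
    with der[of s] s t1 t2 have "(x has_real_derivative x' s) (at s)" by auto
    then have "(g has_real_derivative (x' s - C * x s) * exp (- C * s)) (at s)"
      unfolding g_def by (auto intro!: derivative_eq_intros simp: algebra_simps)
    moreover have "0 \<le> (x' s - C * x s) * exp (- C * s)"
      using bound[of s] neg[of s] s t1 t2 by auto
    ultimately show "\<exists>y. (g has_real_derivative y) (at s) \<and> 0 \<le> y" by blast
  next
    show "continuous_on {t1..t2} g" unfolding g_def
      using t1 t2 by (intro continuous_intros continuous_on_subset[OF cont]) auto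
  qed
  moreover have "0 \<le> g t1" "g t2 < 0" using t1 t2 by (simp_all add: g_def mult_neg_pos)
  ultimately show False by simp
qed

lemma le_if_deriv_nonpos_above:
  fixes x x' :: "real \<Rightarrow> real" and a b K :: real
  assumes der: "\<And>t. t \<in> {a..b} \<Longrightarrow> (x has_real_derivative x' t) (at t within {a..b})"
    and "x a \<le> K"
    and bound: "\<And>t. t \<in> {a<..<b} \<Longrightarrow> K < x t \<Longrightarrow> x' t \<le> 0"
  shows "\<forall>t\<in>{a..b}. x t \<le> K"
proof -
  have "\<forall>t\<in>{a..b}. 0 \<le> K - x t"
  proof (rule nonneg_if_deriv_ge_linear_on_neg[where C = 0])
    show "((\<lambda>t. K - x t) has_real_derivative - x' t) (at t within {a..b})" if "t \<in> {a..b}" for t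
      using der[OF that] by (auto intro!: derivative_eq_intros)
  qed (use \<open>x a \<le> K\<close> bound in auto)
  then show ?thesis by simp
qed

lemma Icc_continuation_induct:
  fixes a b :: real and P :: "real \<Rightarrow> bool"
  assumes "a \<le> b" "P a" and closed: "closed {t \<in> {a..b}. P t}"
    and step: "\<And>t. t \<in> {a..<b} \<Longrightarrow> \<forall>s\<in>{a..t}. P s \<Longrightarrow> eventually P (at_right t)"
  shows "\<forall>t\<in>{a..b}. P t"
proof -
  define A where "A = {t \<in> {a..b}. \<forall>s\<in>{a..t}. P s}"
  have "a \<in> A" "bdd_above A" using assms(1,2) by (auto simp: A_def)
  define t0 where "t0 = Sup A"
  have t0: "a \<le> t0" "t0 \<le> b"
    using \<open>a \<in> A\<close> \<open>bdd_above A\<close> unfolding t0_def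
    by (auto intro: cSup_upper) (auto intro!: cSup_least simp: A_def)
  have "t0 \<in> A"
  proof (cases "a = t0")
    case False
    have "{a..<t0} \<subseteq> {t \<in> {a..b}. P t}"
    proof
      fix s assume s: "s \<in> {a..<t0}"
      then obtain u where "u \<in> A" "s < u"
        using less_cSup_iff[OF _ \<open>bdd_above A\<close>] \<open>a \<in> A\<close> unfolding t0_def by force
      with s t0 show "s \<in> {t \<in> {a..b}. P t}" by (auto simp: A_def)
    qed
    then have "closure {a..<t0} \<subseteq> {t \<in> {a..b}. P t}" using closed by (rule closure_minimal)
    with False t0 show ?thesis by (auto simp: A_def)
  qed (use \<open>a \<in> A\<close> in simp)
  have "t0 = b"
  proof (rule ccontr)
    assume "t0 \<noteq> b"
    with t0 \<open>t0 \<in> A\<close> have "eventually P (at_right t0)" by (intro step) (auto simp: A_def)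
    then obtain c where "t0 < c" and c: "\<And>s. t0 < s \<Longrightarrow> s < c \<Longrightarrow> P s"
      unfolding eventually_at_right_field by blast
    define u where "u = min b ((t0 + c) / 2)"
    have "u \<in> A" using \<open>t0 \<in> A\<close> \<open>t0 < c\<close> c t0
      unfolding A_def u_def by (force simp: not_le)
    then have "u \<le> t0" unfolding t0_def using \<open>bdd_above A\<close> by (rule cSup_upper)
    with \<open>t0 \<noteq> b\<close> t0 \<open>t0 < c\<close> show False by (auto simp: u_def min_def split: if_splits)
  qed
  with \<open>t0 \<in> A\<close> show ?thesis by (auto simp: A_def)
qed

lemma has_real_derivative_at_right_of_Icc:
  assumes "(f has_real_derivative D) (at t within {a..b})" "t \<in> {a..<b}"
  shows "(f has_real_derivative D) (at_right t)"
proof -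
  have "(f has_real_derivative D) (at t within {t..b})"
    using assms by (auto intro: DERIV_subset)
  with assms(2) show ?thesis by (simp add: at_within_Icc_at_right)
qed

lemma tendsto_at_right_of_continuous_on_Icc:
  assumes "continuous_on {a..b} f" "t \<in> {a..<b}"
  shows "(f \<longlongrightarrow> f t) (at_right t)"
proof -
  have "continuous_on {t..b} f" using assms(1) by (rule continuous_on_subset) (use assms(2) in auto)
  with assms(2) have "(f \<longlongrightarrow> f t) (at t within {t..b})" by (auto simp: continuous_on_def)
  with assms(2) show ?thesis by (simp add: at_within_Icc_at_right)
qed

lemma eventually_at_right_nonneg:
  fixes x :: "real \<Rightarrow> real"
  assumes der: "(x has_real_derivative D) (at_right t)"
    and "0 \<le> x t" and "x t = 0 \<Longrightarrow> 0 < D"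
  shows "\<forall>\<^sub>F s in at_right t. 0 \<le> x s"
proof (cases "x t = 0")
  case True
  obtain d where "0 < d" and inc: "\<forall>h>0. t + h \<in> {t<..} \<longrightarrow> h < d \<longrightarrow> x t < x (t + h)"
    using has_real_derivative_pos_inc_right[OF der] True assms(3) by blast
  have "0 \<le> x s" if "t < s" "s < t + d" for s
    using inc[rule_format, of "s - t"] that True by simp
  with \<open>0 < d\<close> show ?thesis unfolding eventually_at_right_field by (intro exI[of _ "t + d"]) auto
next
  case False
  with assms(2) have "0 < x t" by simp
  moreover have "(x \<longlongrightarrow> x t) (at_right t)"
    using DERIV_continuous[OF der] by (simp add: continuous_within)
  ultimately have "\<forall>\<^sub>F s in at_right t. 0 < x s" by (intro order_tendstoD(1))
  then show ?thesis by (rule eventually_mono) simp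
qed

lemma C2_on_lipschitz_near:
  assumes "C2_on A g" "p \<in> A"
  obtains e M where "0 < e" "M-lipschitz_on (cball p e) g"
proof -
  obtain U g' g'' where "open U" "A \<subseteq> U"
    and g': "\<forall>x\<in>U. (g has_derivative blinfun_apply (g' x)) (at x)"
    and g'': "\<forall>x\<in>U. (g' has_derivative blinfun_apply (g'' x)) (at x)"
    using assms(1) unfolding C2_on_def by blast
  with assms(2) obtain e where "0 < e" and e: "cball p e \<subseteq> U"
    using open_contains_cball by blast
  have "continuous_on (cball p e) g'"
    using e g'' by (intro continuous_at_imp_continuous_on) (auto dest: has_derivative_continuous)
  then have "compact (g' ` cball p e)" by (intro compact_continuous_image) auto
  then obtain M where "0 < M" and M: "\<And>x. x \<in> cball p e \<Longrightarrow> norm (g' x) \<le> M"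
    by (auto dest!: compact_imp_bounded simp: bounded_pos)
  have "norm (g x - g y) \<le> M * norm (x - y)" if "x \<in> cball p e" "y \<in> cball p e" for x y
  proof (rule differentiable_bound[OF convex_cball _ _ that])
    show "(g has_derivative blinfun_apply (g' z)) (at z within cball p e)" if "z \<in> cball p e" for z
      using that e g' by (meson has_derivative_at_withinI subsetD)
    show "onorm (blinfun_apply (g' z)) \<le> M" if "z \<in> cball p e" for z
      using M[OF that] by (simp add: norm_blinfun.rep_eq[symmetric])
  qed
  with \<open>0 < M\<close> have "M-lipschitz_on (cball p e) g" by (auto intro!: lipschitz_onI simp: dist_norm)
  with \<open>0 < e\<close> show thesis by (rule that)
qed

(* The bound is used for i < 0, outside the quadrant: C2_on provides the derivative on an open
   neighbourhood of it. *)
lemma incidence_le_linear_near: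
  assumes "incidence_hyp F f" "0 \<le> s0"
  obtains e M where "0 < e"
    "\<And>s i. 0 \<le> s \<Longrightarrow> \<bar>s - s0\<bar> < e \<Longrightarrow> \<bar>i\<bar> < e \<Longrightarrow> \<bar>F s i\<bar> \<le> M * \<bar>i\<bar>"
proof -
  define G where "G p = F (fst p) (snd p)" for p :: "real \<times> real"
  have F0: "\<And>s. 0 \<le> s \<Longrightarrow> F s 0 = 0" using assms(1) unfolding incidence_hyp_def by auto
  have "C2_on quad2 G" using assms(1) unfolding incidence_hyp_def G_def by auto
  moreover have "(s0, 0) \<in> quad2" using assms(2) by (simp add: quad2_def)
  ultimately obtain e M where "0 < e" and lip: "M-lipschitz_on (cball (s0, 0) e) G"
    by (rule C2_on_lipschitz_near)
  have "\<bar>F s i\<bar> \<le> M * \<bar>i\<bar>" if "0 \<le> s" "\<bar>s - s0\<bar> < e / 2" "\<bar>i\<bar> < e / 2" for s i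
  proof -
    have "(s, i') \<in> cball (s0, 0) e" if "\<bar>i'\<bar> < e / 2" for i'
    proof -
      have "dist (s0, 0) (s, i') \<le> \<bar>s - s0\<bar> + \<bar>i'\<bar>"
        using norm_Pair_le[of "s0 - s" "0 - i'"] by (simp add: dist_norm)
      with that \<open>\<bar>s - s0\<bar> < e / 2\<close> show ?thesis by simp
    qed
    then have "dist (G (s, i)) (G (s, 0)) \<le> M * dist (s, i) (s, 0)"
      using lipschitz_onD[OF lip] \<open>0 < e\<close> that(3) by simp
    with \<open>0 \<le> s\<close> F0 show ?thesis
      by (simp add: G_def dist_Pair_Pair dist_real_def)
  qed
  with \<open>0 < e\<close> show thesis by (intro that[of "e / 2"]) auto
qed

lemma incidence_eventually_nonneg_at_right:
  fixes S I g :: "real \<Rightarrow> real"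
  assumes "incidence_hyp F f"
    and der: "\<And>s. s \<in> {a..b} \<Longrightarrow>
      (I has_real_derivative F (S s) (I s) + g s * I s) (at s within {a..b})"
    and cont: "continuous_on {a..b} S" "continuous_on {a..b} g"
    and t: "t \<in> {a..<b}" and "0 \<le> I t" "0 \<le> S t"
    and S_nonneg: "\<forall>\<^sub>F s in at_right t. 0 \<le> S s"
  shows "\<forall>\<^sub>F s in at_right t. 0 \<le> I s"
proof -
  obtain e M where "0 < e"
    and F_bound: "\<And>s i. 0 \<le> s \<Longrightarrow> \<bar>s - S t\<bar> < e \<Longrightarrow> \<bar>i\<bar> < e \<Longrightarrow> \<bar>F s i\<bar> \<le> M * \<bar>i\<bar>"
    using incidence_le_linear_near[OF assms(1) \<open>0 \<le> S t\<close>] by blast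
  have "continuous_on {a..b} I" using der by (rule DERIV_continuous_on)
  then have "(I \<longlongrightarrow> I t) (at_right t)" "(S \<longlongrightarrow> S t) (at_right t)" "(g \<longlongrightarrow> g t) (at_right t)"
    using cont t by (auto intro: tendsto_at_right_of_continuous_on_Icc)
  then have "\<forall>\<^sub>F s in at_right t. 0 \<le> S s \<and> \<bar>I s - I t\<bar> < e \<and> \<bar>S s - S t\<bar> < e \<and> \<bar>g s - g t\<bar> < 1"
    using \<open>0 < e\<close> S_nonneg by (auto simp: tendsto_iff dist_real_def eventually_conj_iff)
  then obtain c where "t < c" and near: "\<And>s. t < s \<Longrightarrow> s < c \<Longrightarrow>
      0 \<le> S s \<and> \<bar>I s - I t\<bar> < e \<and> \<bar>S s - S t\<bar> < e \<and> \<bar>g s - g t\<bar> < 1"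
    unfolding eventually_at_right_field by blast
  define c' where "c' = min b c"
  have "\<forall>s\<in>{t..c'}. 0 \<le> I s"
  proof (rule nonneg_if_deriv_ge_linear_on_neg[where C = "M + g t + 1"])
    show "(I has_real_derivative F (S s) (I s) + g s * I s) (at s within {t..c'})" if "s \<in> {t..c'}" for s
      using der[of s] that t by (auto simp: c'_def intro: DERIV_subset)
    fix s assume s: "s \<in> {t<..<c'}" and "I s < 0"
    with near[of s] have near_s: "0 \<le> S s" "\<bar>S s - S t\<bar> < e" "\<bar>I s - I t\<bar> < e" "\<bar>g s - g t\<bar> < 1"
      by (auto simp: c'_def)
    with \<open>0 \<le> I t\<close> \<open>I s < 0\<close> have "\<bar>I s\<bar> < e" by linarith
    with near_s have "\<bar>F (S s) (I s)\<bar> \<le> M * \<bar>I s\<bar>" "g s \<le> g t + 1"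
      by (auto intro: F_bound)
    with \<open>I s < 0\<close> have "M * I s \<le> F (S s) (I s)" "(g t + 1) * I s \<le> g s * I s"
      by (auto intro: mult_right_mono_neg)
    then show "(M + g t + 1) * I s \<le> F (S s) (I s) + g s * I s" by (simp add: algebra_simps)
  qed (use \<open>0 \<le> I t\<close> in simp)
  moreover have "t < c'" using t \<open>t < c\<close> by (simp add: c'_def)
  ultimately show ?thesis unfolding eventually_at_right_field by (intro exI[of _ c']) auto
qed

locale vaccination_model =
  fixes \<Lambda> \<mu> r k \<alpha>1 \<alpha>2 T :: real
    and F1 F2 f1 f2 :: "real \<Rightarrow> real \<Rightarrow> real"
    and S V1 I1 I2 :: "real \<Rightarrow> real"
  assumes \<Lambda>_pos: "0 < \<Lambda>" and \<mu>_pos: "0 < \<mu>" and r_nonneg: "0 \<le> r" and k_nonneg: "0 \<le> k"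
    and \<alpha>1_ge: "\<mu> \<le> \<alpha>1" and \<alpha>2_ge: "\<mu> \<le> \<alpha>2"
    and incidence1: "incidence_hyp F1 f1" and incidence2: "incidence_hyp F2 f2"
    and T_nonneg: "0 \<le> T"
    and S_deriv: "\<And>t. t \<in> {0..T} \<Longrightarrow> (S has_real_derivative
           (\<Lambda> - F1 (S t) (I1 t) - F2 (S t) (I2 t) - (r + \<mu>) * S t)) (at t within {0..T})"
    and V1_deriv: "\<And>t. t \<in> {0..T} \<Longrightarrow> (V1 has_real_derivative
           (r * S t - (\<mu> + k * I2 t) * V1 t)) (at t within {0..T})"
    and I1_deriv: "\<And>t. t \<in> {0..T} \<Longrightarrow> (I1 has_real_derivative
           (F1 (S t) (I1 t) - \<alpha>1 * I1 t)) (at t within {0..T})"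
    and I2_deriv: "\<And>t. t \<in> {0..T} \<Longrightarrow> (I2 has_real_derivative
           (F2 (S t) (I2 t) + k * I2 t * V1 t - \<alpha>2 * I2 t)) (at t within {0..T})"
begin

lemma continuous_on_S: "continuous_on {0..T} S"
  using S_deriv by (rule DERIV_continuous_on)

lemma continuous_on_V1: "continuous_on {0..T} V1"
  using V1_deriv by (rule DERIV_continuous_on)

lemma S_I1_I2_nonneg:
  assumes "0 \<le> S 0" "0 \<le> I1 0" "0 \<le> I2 0"
  shows "\<forall>t\<in>{0..T}. 0 \<le> S t \<and> 0 \<le> I1 t \<and> 0 \<le> I2 t"
proof (rule Icc_continuation_induct[OF T_nonneg])
  have "closed {t \<in> {0..T}. 0 \<le> min (S t) (min (I1 t) (I2 t))}"
    using S_deriv I1_deriv I2_deriv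
    by (intro continuous_on_closed_Collect_le continuous_intros continuous_on_S
        DERIV_continuous_on[where f = I1] DERIV_continuous_on[where f = I2]) auto
  then show "closed {t \<in> {0..T}. 0 \<le> S t \<and> 0 \<le> I1 t \<and> 0 \<le> I2 t}" by simp
next
  fix t assume t: "t \<in> {0..<T}" and "\<forall>s\<in>{0..t}. 0 \<le> S s \<and> 0 \<le> I1 s \<and> 0 \<le> I2 s"
  then have nonneg: "0 \<le> S t" "0 \<le> I1 t" "0 \<le> I2 t" by auto
  have F0: "F1 0 (I1 t) = 0" "F2 0 (I2 t) = 0"
    using incidence1 incidence2 nonneg unfolding incidence_hyp_def by auto
  \<comment> \<open>Both incidences vanish at S = 0, where the influx \<Lambda> pushes S back up.\<close>
  have "(S has_real_derivative \<Lambda> - F1 (S t) (I1 t) - F2 (S t) (I2 t) - (r + \<mu>) * S t) (at_right t)"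
    using S_deriv t by (intro has_real_derivative_at_right_of_Icc) auto
  then have S_ev: "\<forall>\<^sub>F s in at_right t. 0 \<le> S s"
    by (rule eventually_at_right_nonneg) (use nonneg F0 \<Lambda>_pos in auto)
  have I1_ev: "\<forall>\<^sub>F s in at_right t. 0 \<le> I1 s"
  proof (rule incidence_eventually_nonneg_at_right[where I = I1 and S = S and g = "\<lambda>_. - \<alpha>1",
        OF incidence1 _ continuous_on_S _ t nonneg(2,1) S_ev])
    show "(I1 has_real_derivative F1 (S s) (I1 s) + - \<alpha>1 * I1 s) (at s within {0..T})"
      if "s \<in> {0..T}" for s
      using I1_deriv[OF that] by simp
  qed simp
  have I2_ev: "\<forall>\<^sub>F s in at_right t. 0 \<le> I2 s"
  proof (rule incidence_eventually_nonneg_at_right[where I = I2 and S = S and g = "\<lambda>s. k * V1 s - \<alpha>2",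
        OF incidence2 _ continuous_on_S _ t nonneg(3,1) S_ev])
    show "(I2 has_real_derivative F2 (S s) (I2 s) + (k * V1 s - \<alpha>2) * I2 s) (at s within {0..T})"
      if "s \<in> {0..T}" for s
      using I2_deriv[OF that] by (simp add: algebra_simps)
    show "continuous_on {0..T} (\<lambda>s. k * V1 s - \<alpha>2)"
      by (intro continuous_intros continuous_on_V1)
  qed
  from S_ev I1_ev I2_ev show "\<forall>\<^sub>F s in at_right t. 0 \<le> S s \<and> 0 \<le> I1 s \<and> 0 \<le> I2 s"
    by (auto simp: eventually_conj_iff)
qed (use assms in simp)

lemma V1_nonneg:
  assumes "0 \<le> V1 0" and "\<forall>t\<in>{0..T}. 0 \<le> S t \<and> 0 \<le> I2 t"
  shows "\<forall>t\<in>{0..T}. 0 \<le> V1 t"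
proof (rule nonneg_if_deriv_ge_linear_on_neg[where C = 0, OF V1_deriv \<open>0 \<le> V1 0\<close>])
  fix t assume "t \<in> {0<..<T}" "V1 t < 0"
  with assms(2) r_nonneg k_nonneg \<mu>_pos have "0 \<le> r * S t" "(\<mu> + k * I2 t) * V1 t \<le> 0"
    by (auto intro: mult_nonneg_nonpos)
  then show "0 * V1 t \<le> r * S t - (\<mu> + k * I2 t) * V1 t" by simp
qed

lemma S_le:
  assumes "S 0 \<le> \<Lambda> / (r + \<mu>)" and "\<forall>t\<in>{0..T}. 0 \<le> S t \<and> 0 \<le> I1 t \<and> 0 \<le> I2 t"
  shows "\<forall>t\<in>{0..T}. S t \<le> \<Lambda> / (r + \<mu>)"
proof (rule le_if_deriv_nonpos_above[OF S_deriv \<open>S 0 \<le> _\<close>])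
  fix t assume t: "t \<in> {0<..<T}" and "\<Lambda> / (r + \<mu>) < S t"
  with r_nonneg \<mu>_pos have "\<Lambda> < (r + \<mu>) * S t" by (simp add: field_simps)
  moreover have "0 \<le> F1 (S t) (I1 t)" "0 \<le> F2 (S t) (I2 t)"
    using assms(2) t incidence1 incidence2 unfolding incidence_hyp_def by auto
  ultimately show "\<Lambda> - F1 (S t) (I1 t) - F2 (S t) (I2 t) - (r + \<mu>) * S t \<le> 0" by simp
qed

lemma V1_le:
  assumes "V1 0 \<le> r * \<Lambda> / (\<mu> * (r + \<mu>))"
    and "\<forall>t\<in>{0..T}. S t \<le> \<Lambda> / (r + \<mu>) \<and> 0 \<le> I2 t \<and> 0 \<le> V1 t"
  shows "\<forall>t\<in>{0..T}. V1 t \<le> r * \<Lambda> / (\<mu> * (r + \<mu>))"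
proof (rule le_if_deriv_nonpos_above[OF V1_deriv \<open>V1 0 \<le> _\<close>])
  fix t assume t: "t \<in> {0<..<T}" and above: "r * \<Lambda> / (\<mu> * (r + \<mu>)) < V1 t"
  have "\<mu> * (r * \<Lambda> / (\<mu> * (r + \<mu>))) < \<mu> * V1 t"
    using above \<mu>_pos by (rule mult_strict_left_mono)
  with \<mu>_pos have gap: "r * (\<Lambda> / (r + \<mu>)) < \<mu> * V1 t" by simp
  have "S t \<le> \<Lambda> / (r + \<mu>)" "0 \<le> I2 t" "0 \<le> V1 t" using assms(2) t by auto
  with r_nonneg have "r * S t \<le> r * (\<Lambda> / (r + \<mu>))" by (intro mult_left_mono)
  moreover have "0 \<le> k * I2 t * V1 t" using \<open>0 \<le> I2 t\<close> \<open>0 \<le> V1 t\<close> k_nonneg by simp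
  ultimately show "r * S t - (\<mu> + k * I2 t) * V1 t \<le> 0" using gap by (simp add: algebra_simps)
qed

lemma total_le:
  assumes "S 0 + V1 0 + I1 0 + I2 0 \<le> \<Lambda> / \<mu>" and "\<forall>t\<in>{0..T}. 0 \<le> I1 t \<and> 0 \<le> I2 t"
  shows "\<forall>t\<in>{0..T}. S t + V1 t + I1 t + I2 t \<le> \<Lambda> / \<mu>"
proof (rule le_if_deriv_nonpos_above[where x = "\<lambda>t. S t + V1 t + I1 t + I2 t"])
  fix t assume "t \<in> {0..T}"
  then show "((\<lambda>t. S t + V1 t + I1 t + I2 t) has_real_derivative
      \<Lambda> - \<mu> * (S t + V1 t) - \<alpha>1 * I1 t - \<alpha>2 * I2 t) (at t within {0..T})"
    using S_deriv V1_deriv I1_deriv I2_deriv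
    by (auto intro!: derivative_eq_intros simp: algebra_simps)
next
  fix t assume t: "t \<in> {0<..<T}" and "\<Lambda> / \<mu> < S t + V1 t + I1 t + I2 t"
  with \<mu>_pos have "\<Lambda> < \<mu> * (S t + V1 t + I1 t + I2 t)" by (simp add: field_simps)
  moreover have "\<mu> * I1 t \<le> \<alpha>1 * I1 t" "\<mu> * I2 t \<le> \<alpha>2 * I2 t"
    using assms(2) t \<alpha>1_ge \<alpha>2_ge by (auto intro: mult_right_mono)
  ultimately show "\<Lambda> - \<mu> * (S t + V1 t) - \<alpha>1 * I1 t - \<alpha>2 * I2 t \<le> 0"
    by (simp add: algebra_simps)
qed (use assms(1) in simp)

lemma Omega1_invariant:
  assumes "(S 0, V1 0, I1 0, I2 0) \<in> Omega1 \<Lambda> \<mu> r"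
  shows "\<forall>t\<in>{0..T}. (S t, V1 t, I1 t, I2 t) \<in> Omega1 \<Lambda> \<mu> r"
proof -
  have init: "0 \<le> S 0" "0 \<le> V1 0" "0 \<le> I1 0" "0 \<le> I2 0" "S 0 + V1 0 + I1 0 + I2 0 \<le> \<Lambda> / \<mu>"
    "S 0 \<le> \<Lambda> / (r + \<mu>)" "V1 0 \<le> r * \<Lambda> / (\<mu> * (r + \<mu>))"
    using assms unfolding Omega1_def Omega_def by auto
  have S_I: "\<forall>t\<in>{0..T}. 0 \<le> S t \<and> 0 \<le> I1 t \<and> 0 \<le> I2 t" using S_I1_I2_nonneg init by blast
  have V1: "\<forall>t\<in>{0..T}. 0 \<le> V1 t" using V1_nonneg init S_I by blast
  have S: "\<forall>t\<in>{0..T}. S t \<le> \<Lambda> / (r + \<mu>)" using S_le init S_I by blast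
  have "\<forall>t\<in>{0..T}. V1 t \<le> r * \<Lambda> / (\<mu> * (r + \<mu>))" using V1_le init S_I V1 S by blast
  moreover have "\<forall>t\<in>{0..T}. S t + V1 t + I1 t + I2 t \<le> \<Lambda> / \<mu>" using total_le init S_I by blast
  ultimately show ?thesis using S_I V1 S unfolding Omega1_def Omega_def by auto
qed

end

theorem mainTheorem3:
  fixes \<Lambda> \<mu> r k \<gamma>1 \<gamma>2 v1 v2 T :: real
    and F1 F2 f1 f2 :: "real \<Rightarrow> real \<Rightarrow> real"
    and S V1 I1 I2 :: "real \<Rightarrow> real"
  assumes "\<Lambda> > 0" "\<mu> > 0" "r > 0" "k > 0" "\<gamma>1 > 0" "\<gamma>2 > 0" "v1 \<ge> 0" "v2 \<ge> 0"
    and "incidence_hyp F1 f1" and "incidence_hyp F2 f2"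
    and "T \<ge> 0"
    and "\<And>t. t \<in> {0..T} \<Longrightarrow> (S has_real_derivative
           (\<Lambda> - F1 (S t) (I1 t) - F2 (S t) (I2 t) - (r + \<mu>) * S t)) (at t within {0..T})"
    and "\<And>t. t \<in> {0..T} \<Longrightarrow> (V1 has_real_derivative
           (r * S t - (\<mu> + k * I2 t) * V1 t)) (at t within {0..T})"
    and "\<And>t. t \<in> {0..T} \<Longrightarrow> (I1 has_real_derivative
           (F1 (S t) (I1 t) - (\<gamma>1 + v1 + \<mu>) * I1 t)) (at t within {0..T})"
    and "\<And>t. t \<in> {0..T} \<Longrightarrow> (I2 has_real_derivative
           (F2 (S t) (I2 t) + k * I2 t * V1 t - (\<gamma>2 + v2 + \<mu>) * I2 t)) (at t within {0..T})"
    and "(S 0, V1 0, I1 0, I2 0) \<in> Omega1 \<Lambda> \<mu> r"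
  shows "\<forall>t\<in>{0..T}. (S t, V1 t, I1 t, I2 t) \<in> Omega1 \<Lambda> \<mu> r"
proof -
  interpret vaccination_model \<Lambda> \<mu> r k "\<gamma>1 + v1 + \<mu>" "\<gamma>2 + v2 + \<mu>" T F1 F2 f1 f2 S V1 I1 I2
    using assms by unfold_locales auto
  show ?thesis using assms(16) by (rule Omega1_invariant)
qed

end
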